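(* Let $V$ be a finite connected subset of $\mathbb{Z}^{2}$. Then \[ \ell_{\mathrm{TS}}(V)\le|V|\left(1+8\left(\frac{|\partial V|}{|V|}\right)^{1/3}\right). \]
   Context: $\mathbb{Z}^2$ is considered with its standard Cayley graph with respect to $e_1=(1,0)$, $e_2=(0,1)$; connectedness refers to this graph. For a finite set $V\subseteq\mathbb{Z}^2$, $\ell_{\mathrm{TS}}(V)$ is the length of a shortest path in this graph visiting every point of $V$ (starting and ending points not prescribed). $\partial V$ is the inner boundary: the set of points of $V$ having at least one neighbour outside $V$. *)

theory Defs
  imports Complex_Main
begin

type_synonym pt = "int \<times> int"

definition adj :: "pt \<Rightarrow> pt \<Rightarrow> bool" where
  "adj p q \<longleftrightarrow> \<bar>fst p - fst q\<bar> + \<bar>snd p - snd q\<bar> = 1"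

definition is_path :: "pt list \<Rightarrow> bool" where
  "is_path xs \<longleftrightarrow> xs \<noteq> [] \<and> (\<forall>i. Suc i < length xs \<longrightarrow> adj (xs ! i) (xs ! Suc i))"

definition connected_Z2 :: "pt set \<Rightarrow> bool" where
  "connected_Z2 V \<longleftrightarrow>
     (\<forall>p\<in>V. \<forall>q\<in>V. \<exists>xs. is_path xs \<and> hd xs = p \<and> last xs = q \<and> set xs \<subseteq> V)"

definition l_TS :: "pt set \<Rightarrow> nat" where
  "l_TS V = (LEAST n. \<exists>xs. is_path xs \<and> V \<subseteq> set xs \<and> length xs - 1 = n)"

definition inner_boundary :: "pt set \<Rightarrow> pt set" where
  "inner_boundary V = {p \<in> V. \<exists>q. adj p q \<and> q \<notin> V}"

end

theory Submission
  imports Defs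
begin

text \<open>Group the rows 2j and 2j+1 into horizontal strips. Inside a strip, a maximal interval
  of columns both of whose cells lie in V (a run) spans a 2 x m rectangle, which a closed walk
  with 2m steps traverses; the cell at the right end of a run that faces the first non-full
  column lies in the inner boundary, and distinct runs give distinct such cells. Every other
  point of V has its strip partner outside V and is itself a boundary point. By connectivity
  these closed walks (and the one-point walks at the unpaired points) can be glued together one
  at a time, each gluing costing at most two extra steps, so
  l_TS V <= card V + 2 * card (inner_boundary V). The theorem follows because
  t <= t powr (1/3) for 0 <= t <= 1.\<close>

lemma adj_sym: "adj p q \<Longrightarrow> adj q p"
  unfolding adj_def by (simp add: abs_minus_commute)

lemma is_path_iff_successively: "is_path xs \<longleftrightarrow> xs \<noteq> [] \<and> successively adj xs"
  unfolding is_path_def successively_conv_nth by blast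

(* Not a simp rule: its right-hand side matches its left-hand side with ys = []. *)
lemma successively_append_Cons_iff:
  "successively P (xs @ x # ys) \<longleftrightarrow> successively P (xs @ [x]) \<and> successively P (x # ys)"
  by (cases ys) (auto simp: successively_append_iff)

definition closed_walk :: "pt list \<Rightarrow> bool" where
  "closed_walk w \<longleftrightarrow> w \<noteq> [] \<and> successively adj w \<and> hd w = last w"

lemma closed_walk_rotate:
  assumes "closed_walk c" "p \<in> set c"
  obtains c' where "closed_walk c'" "hd c' = p" "set c' = set c" "length c' = length c"
proof -
  obtain u v where c: "c = u @ p # v" using assms(2) by (meson split_list)
  show ?thesis
  proof (cases u)
    case Nil
    then show ?thesis using that[of c] assms(1) c by simp
  next
    case (Cons x u')
    have "last (p # v) = x" using assms(1) c Cons unfolding closed_walk_def by simp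
    then obtain ys where ys: "p # v = ys @ [x]" by (metis append_butlast_last_id list.distinct(1))
    have "successively adj c" using assms(1) unfolding closed_walk_def by simp
    then have "successively adj ((x # u') @ [p])" "successively adj (p # v)"
      using c Cons successively_append_Cons_iff[of adj "x # u'" p v] by simp_all
    then have "successively adj (ys @ x # u' @ [p])"
      using successively_append_Cons_iff[of adj ys x "u' @ [p]"] ys by simp
    moreover have "hd (ys @ x # u' @ [p]) = p" using ys by (cases ys) auto
    ultimately have "closed_walk (ys @ x # u' @ [p])" unfolding closed_walk_def by simp
    moreover have "set (ys @ [x]) = set (p # v)" "length (ys @ [x]) = length (p # v)"
      by (simp_all only: ys)
    then have "set (ys @ x # u' @ [p]) = set c" "length (ys @ x # u' @ [p]) = length c"
      using c Cons by auto
    ultimately show ?thesis using that \<open>hd (ys @ x # u' @ [p]) = p\<close> by blast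
  qed
qed

lemma closed_walk_splice:
  assumes "closed_walk (u @ p # v)" "closed_walk w" "hd w = p"
  shows "closed_walk (u @ w @ v)"
proof -
  obtain w' where w': "w = p # w'" using assms(2,3) unfolding closed_walk_def by (cases w) auto
  have u: "successively adj (u @ [p])" and v: "successively adj (p # v)"
    using assms(1) successively_append_Cons_iff[of adj u p v] unfolding closed_walk_def by simp_all
  have "successively adj w" "last w = p" using assms(2,3) unfolding closed_walk_def by auto
  with v have "successively adj (w @ v)"
    by (cases v) (auto simp: successively_append_iff)
  with u have "successively adj (u @ p # w' @ v)"
    using successively_append_Cons_iff[of adj u p "w' @ v"] w' by simp
  moreover have "hd (u @ w @ v) = hd (u @ p # v)" "last (u @ w @ v) = last (u @ p # v)"
    using w' \<open>last w = p\<close> by (cases u; cases v; simp)+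
  ultimately show ?thesis using assms(1) w' unfolding closed_walk_def by simp
qed

lemma closed_walk_detour:
  assumes "closed_walk w" "hd w = q" "adj p q"
  shows "closed_walk (p # w @ [p])"
proof -
  have "w \<noteq> []" "successively adj w" "adj (last w) p" "adj p (hd w)"
    using assms adj_sym unfolding closed_walk_def by auto
  then show ?thesis
    unfolding closed_walk_def by (auto simp: successively_append_iff successively_Cons)
qed

lemma closed_walk_join:
  assumes c: "closed_walk c" and w: "closed_walk w" and "p \<in> set c" "q \<in> set w"
    and pq: "p = q \<or> adj p q"
  obtains c' where "closed_walk c'" "set c' = set c \<union> set w" "length c' \<le> length c + length w + 1"
proof -
  obtain w' where w': "closed_walk w'" "hd w' = q" "set w' = set w" "length w' = length w"
    using closed_walk_rotate[OF w \<open>q \<in> set w\<close>] by blast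
  obtain d where d: "closed_walk d" "hd d = p" "set d = insert p (set w)" "length d \<le> length w + 2"
  proof (cases "p = q")
    case True
    then show ?thesis using that[of w'] w' \<open>q \<in> set w\<close> by auto
  next
    case False
    then show ?thesis
      using that[of "p # w' @ [p]"] closed_walk_detour[OF w'(1,2)] pq w' by auto
  qed
  obtain u v where c_eq: "c = u @ p # v" using \<open>p \<in> set c\<close> by (meson split_list)
  have "closed_walk (u @ d @ v)" using closed_walk_splice c d(1,2) c_eq by blast
  moreover have "set (u @ d @ v) = set c \<union> set w" using c_eq d(3) by auto
  moreover have "length (u @ d @ v) \<le> length c + length w + 1" using c_eq d(4) by simp
  ultimately show ?thesis using that by blast
qed

lemma successively_leaves_set:
  assumes "successively P xs" "xs \<noteq> []" "hd xs \<in> S" "last xs \<notin> S"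
  shows "\<exists>a b. a \<in> S \<and> b \<in> set xs - S \<and> P a b"
  using assms
proof (induction xs)
  case (Cons x xs)
  then have "xs \<noteq> []" by auto
  then have "P x (hd xs)" "successively P xs" using Cons.prems(1) by (auto simp: successively_Cons)
  show ?case
  proof (cases "hd xs \<in> S")
    case True
    then show ?thesis using Cons \<open>successively P xs\<close> \<open>xs \<noteq> []\<close> by auto
  next
    case False
    moreover have "hd xs \<in> set xs" using \<open>xs \<noteq> []\<close> by simp
    ultimately show ?thesis using \<open>P x (hd xs)\<close> Cons.prems(3) by auto
  qed
qed simp

lemma closed_walk_meets_cover:
  assumes "connected_Z2 V" "closed_walk c" "set c \<subseteq> V"
    and "\<forall>i\<in>I. closed_walk (W i) \<and> set (W i) \<subseteq> V" "V \<subseteq> set c \<union> (\<Union>i\<in>I. set (W i))" "I \<noteq> {}"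
  shows "\<exists>i\<in>I. \<exists>p\<in>set c. \<exists>q\<in>set (W i). p = q \<or> adj p q"
proof -
  obtain i0 where "i0 \<in> I" using assms(6) by blast
  then obtain q0 where q0: "q0 \<in> set (W i0)" "q0 \<in> V"
    using assms(4) unfolding closed_walk_def by (metis hd_in_set subsetD)
  have "hd c \<in> set c" using assms(2) unfolding closed_walk_def by simp
  then obtain xs where xs: "is_path xs" "hd xs = hd c" "last xs = q0" "set xs \<subseteq> V"
    using assms(1,3) q0(2) unfolding connected_Z2_def by blast
  show ?thesis
  proof (cases "q0 \<in> set c")
    case True
    then show ?thesis using \<open>i0 \<in> I\<close> q0(1) by blast
  next
    case False
    then obtain p q where "p \<in> set c" "q \<in> set xs - set c" "adj p q"
      using successively_leaves_set[of adj xs "set c"] xs \<open>hd c \<in> set c\<close>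
      unfolding is_path_iff_successively by auto
    moreover obtain i where "i \<in> I" "q \<in> set (W i)" using assms(5) xs(4) calculation(2) by blast
    ultimately show ?thesis by blast
  qed
qed

lemma closed_walks_merge:
  assumes "connected_Z2 V" "finite I" "\<forall>i\<in>I. closed_walk (W i) \<and> set (W i) \<subseteq> V"
    and "closed_walk c" "set c \<subseteq> V" "V \<subseteq> set c \<union> (\<Union>i\<in>I. set (W i))"
  shows "\<exists>c'. closed_walk c' \<and> V \<subseteq> set c' \<and> length c' \<le> length c + (\<Sum>i\<in>I. length (W i) + 1)"
  using assms(2-6)
proof (induction I arbitrary: c rule: finite_remove_induct)
  case empty
  then show ?case by auto
next
  case (remove I)
  obtain i p q where near: "i \<in> I" "p \<in> set c" "q \<in> set (W i)" "p = q \<or> adj p q"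
    using closed_walk_meets_cover[OF assms(1) remove.prems(2,3,1,4) remove.hyps(2)] by blast
  obtain c'' where c'': "closed_walk c''" "set c'' = set c \<union> set (W i)"
    "length c'' \<le> length c + length (W i) + 1"
    using closed_walk_join[OF remove.prems(2) _ near(2,3,4)] remove.prems(1) near(1) by blast
  have "set c'' \<subseteq> V" "V \<subseteq> set c'' \<union> (\<Union>j\<in>I - {i}. set (W j))"
    using c''(2) remove.prems near(1) by auto
  then obtain c' where "closed_walk c'" "V \<subseteq> set c'"
    "length c' \<le> length c'' + (\<Sum>j\<in>I - {i}. length (W j) + 1)"
    using remove.IH[OF near(1)] remove.prems(1) c''(1) by blast
  moreover have "(\<Sum>j\<in>I. length (W j) + 1) = length (W i) + 1 + (\<Sum>j\<in>I - {i}. length (W j) + 1)"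
    using remove.hyps(1) near(1) by (simp add: sum.remove)
  ultimately show ?case using c''(3) by (intro exI[of _ c']) auto
qed

lemma l_TS_le_closed_walk: "closed_walk c \<Longrightarrow> V \<subseteq> set c \<Longrightarrow> l_TS V \<le> length c - 1"
  unfolding l_TS_def closed_walk_def is_path_iff_successively by (intro Least_le) blast

lemma successively_upto: "successively (\<lambda>s t. t = s + 1) [i..j]"
proof (induction i j rule: upto.induct)
  case (1 i j)
  show ?case
  proof (cases "i < j")
    case True
    then show ?thesis using 1 by (simp add: upto_rec1[of i] upto_rec1[of "i + 1"] successively_Cons)
  next
    case False
    then have "[i..j] = [] \<or> [i..j] = [i]" by (cases "i = j") auto
    then show ?thesis by auto
  qed
qed

definition rect_tour :: "int \<Rightarrow> int \<Rightarrow> int \<Rightarrow> pt list" where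
  "rect_tour a b y = map (\<lambda>x. (x, y)) [a..b] @ map (\<lambda>x. (x, y + 1)) (rev [a..b]) @ [(a, y)]"

lemma rect_tour:
  assumes "a \<le> b"
  shows "closed_walk (rect_tour a b y)" "set (rect_tour a b y) = {a..b} \<times> {y, y + 1}"
    "length (rect_tour a b y) = card ({a..b} \<times> {y, y + 1}) + 1"
proof -
  define row :: "int \<Rightarrow> pt list" where "row y' = map (\<lambda>x. (x, y')) [a..b]" for y'
  have row_walk: "successively adj (row y')" for y'
    unfolding row_def successively_map
    by (rule successively_mono[OF successively_upto]) (simp add: adj_def)
  then have rev_row_walk: "successively adj (rev (row y'))" for y'
    unfolding successively_rev by (rule successively_mono) (erule adj_sym)
  have "hd [a..b] = a" by (simp add: upto_rec1[OF assms])
  moreover have "last [a..b] = b" by (simp add: upto_rec2[OF assms])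
  ultimately have ends: "row y' \<noteq> []" "hd (row y') = (a, y')" "last (row y') = (b, y')" for y'
    using assms unfolding row_def by (simp_all add: hd_map last_map)
  have "adj (b, y) (b, y + 1)" "adj (a, y + 1) (a, y)" by (simp_all add: adj_def)
  then have "successively adj (row y @ rev (row (y + 1)) @ [(a, y)])"
    using row_walk rev_row_walk ends by (simp add: successively_append_iff hd_rev last_rev)
  moreover have "rect_tour a b y = row y @ rev (row (y + 1)) @ [(a, y)]"
    unfolding rect_tour_def row_def by (simp add: rev_map)
  ultimately show "closed_walk (rect_tour a b y)"
    unfolding closed_walk_def using ends by simp
  show "set (rect_tour a b y) = {a..b} \<times> {y, y + 1}"
    using assms unfolding rect_tour_def by auto
  show "length (rect_tour a b y) = card ({a..b} \<times> {y, y + 1}) + 1"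
    unfolding rect_tour_def by (simp add: card_cartesian_product)
qed

definition maximal_interval :: "(int \<Rightarrow> bool) \<Rightarrow> int \<Rightarrow> int \<Rightarrow> bool" where
  "maximal_interval P a b \<longleftrightarrow> a \<le> b \<and> (\<forall>t\<in>{a..b}. P t) \<and> \<not> P (a - 1) \<and> \<not> P (b + 1)"

lemma maximal_interval_unique:
  assumes "maximal_interval P a b" "maximal_interval P a' b'" "x \<in> {a..b}" "x \<in> {a'..b'}"
  shows "a = a' \<and> b = b'"
proof -
  have "a' - 1 \<notin> {a..b}" "a - 1 \<notin> {a'..b'}" "b' + 1 \<notin> {a..b}" "b + 1 \<notin> {a'..b'}"
    using assms(1,2) unfolding maximal_interval_def by blast+
  then show ?thesis using assms(3,4) by auto
qed

lemma interval_extend_right: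
  fixes P :: "int \<Rightarrow> bool"
  assumes "finite {t. P t}" "P x"
  obtains b where "x \<le> b" "\<forall>t\<in>{x..b}. P t" "\<not> P (b + 1)"
proof -
  define B where "B = {b. x \<le> b \<and> (\<forall>t\<in>{x..b}. P t)}"
  have B_iff: "b \<in> B \<longleftrightarrow> x \<le> b \<and> (\<forall>t\<in>{x..b}. P t)" for b
    unfolding B_def by simp
  have "B \<subseteq> {t. P t}" using B_iff by auto
  then have "finite B" using assms(1) finite_subset by blast
  moreover have "x \<in> B" using assms(2) B_iff by auto
  ultimately obtain m where "m \<in> B" "\<forall>b\<in>B. b \<le> m"
    using Max_in Max_ge by blast
  have "\<not> P (m + 1)"
  proof
    assume "P (m + 1)"
    have "\<forall>t\<in>{x..m + 1}. P t"
    proof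
      fix t assume "t \<in> {x..m + 1}"
      then have "t \<in> {x..m} \<or> t = m + 1" by auto
      then show "P t" using \<open>m \<in> B\<close> \<open>P (m + 1)\<close> B_iff by blast
    qed
    then have "m + 1 \<in> B" using \<open>m \<in> B\<close> B_iff by auto
    then show False using \<open>\<forall>b\<in>B. b \<le> m\<close> by fastforce
  qed
  then show ?thesis using that \<open>m \<in> B\<close> B_iff by blast
qed

lemma maximal_interval_exists:
  fixes P :: "int \<Rightarrow> bool"
  assumes "finite {t. P t}" "P x"
  obtains a b where "maximal_interval P a b" "x \<in> {a..b}"
proof -
  obtain b where b: "x \<le> b" "\<forall>t\<in>{x..b}. P t" "\<not> P (b + 1)"
    using interval_extend_right[OF assms] by blast
  have "{t. P (- t)} = uminus -` {t. P t}" by auto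
  then have "finite {t. P (- t)}" using finite_vimageI[OF assms(1), of uminus] by (simp add: inj_def)
  then obtain a' where a': "- x \<le> a'" "\<forall>t\<in>{- x..a'}. P (- t)" "\<not> P (- (a' + 1))"
    using interval_extend_right[of "\<lambda>t. P (- t)" "- x"] assms(2) by auto
  have "P t" if "t \<in> {- a'..b}" for t
  proof (cases "t \<le> x")
    case True
    then have "- t \<in> {- x..a'}" using that by auto
    then show ?thesis using a'(2) by fastforce
  next
    case False
    then show ?thesis using that b(2) by auto
  qed
  moreover have "- (a' + 1) = - a' - 1" by simp
  ultimately have "maximal_interval P (- a') b" "x \<in> {- a'..b}"
    using a' b unfolding maximal_interval_def by auto
  then show ?thesis using that by blast
qed

definition full_column :: "pt set \<Rightarrow> int \<Rightarrow> int \<Rightarrow> bool" where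
  "full_column V j x \<longleftrightarrow> (x, 2 * j) \<in> V \<and> (x, 2 * j + 1) \<in> V"

definition runs :: "pt set \<Rightarrow> (int \<times> int \<times> int) set" where
  "runs V = {(j, a, b). maximal_interval (full_column V j) a b}"

definition run_rect :: "int \<times> int \<times> int \<Rightarrow> pt set" where
  "run_rect = (\<lambda>(j, a, b). {a..b} \<times> {2 * j, 2 * j + 1})"

definition run_tour :: "int \<times> int \<times> int \<Rightarrow> pt list" where
  "run_tour = (\<lambda>(j, a, b). rect_tour a b (2 * j))"

(* Column b + 1 is not full, so in one of the two rows the right neighbour of column b is missing. *)
definition run_exit :: "pt set \<Rightarrow> int \<times> int \<times> int \<Rightarrow> pt" where
  "run_exit V = (\<lambda>(j, a, b). if (b + 1, 2 * j) \<in> V then (b, 2 * j + 1) else (b, 2 * j))"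

definition partner :: "pt \<Rightarrow> pt" where
  "partner = (\<lambda>(x, y). (x, if even y then y + 1 else y - 1))"

definition unpaired :: "pt set \<Rightarrow> pt set" where
  "unpaired V = {p \<in> V. partner p \<notin> V}"

lemma run_tour:
  assumes "r \<in> runs V"
  shows "closed_walk (run_tour r)" "set (run_tour r) = run_rect r"
    "length (run_tour r) = card (run_rect r) + 1"
  using assms rect_tour[of _ _ "2 * fst r"]
  unfolding runs_def run_tour_def run_rect_def maximal_interval_def by auto

lemma finite_run_rect: "finite (run_rect r)"
  unfolding run_rect_def by (simp split: prod.split)

lemma run_rect_subset: "r \<in> runs V \<Longrightarrow> run_rect r \<subseteq> V"
  unfolding runs_def run_rect_def maximal_interval_def full_column_def by auto

lemma run_rect_disjoint:
  assumes "r \<in> runs V" "r' \<in> runs V" "r \<noteq> r'"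
  shows "run_rect r \<inter> run_rect r' = {}"
proof (rule ccontr)
  obtain j a b j' a' b' where r: "r = (j, a, b)" "r' = (j', a', b')" by (cases r, cases r')
  assume "run_rect r \<inter> run_rect r' \<noteq> {}"
  then obtain x y where "(x, y) \<in> run_rect r" "(x, y) \<in> run_rect r'" by auto
  then have x: "x \<in> {a..b}" "x \<in> {a'..b'}"
    and y: "y \<in> {2 * j, 2 * j + 1}" "y \<in> {2 * j', 2 * j' + 1}"
    unfolding r run_rect_def by auto
  from y have "j = j'" by auto
  then show False
    using assms maximal_interval_unique[of "full_column V j" a b a' b' x] x
    unfolding r runs_def by auto
qed

lemma unpaired_subset_boundary: "unpaired V \<subseteq> inner_boundary V"
proof -
  have "adj p (partner p)" for p unfolding adj_def partner_def by (auto split: prod.split)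
  then show ?thesis unfolding unpaired_def inner_boundary_def by blast
qed

lemma run_exit_in_boundary:
  assumes "r \<in> runs V"
  shows "run_exit V r \<in> inner_boundary V - unpaired V"
proof -
  obtain j a b where r: "r = (j, a, b)" by (cases r)
  have "full_column V j b" "\<not> full_column V j (b + 1)"
    using assms unfolding r runs_def maximal_interval_def by auto
  moreover have "adj (b, y) (b + 1, y)" for y by (simp add: adj_def)
  moreover have "partner (b, 2 * j) = (b, 2 * j + 1)" "partner (b, 2 * j + 1) = (b, 2 * j)"
    unfolding partner_def by auto
  ultimately show ?thesis
    unfolding r run_exit_def inner_boundary_def unpaired_def full_column_def by auto
qed

lemma inj_on_run_exit: "inj_on (run_exit V) (runs V)"
proof (rule inj_onI)
  fix r r' assume "r \<in> runs V" "r' \<in> runs V" "run_exit V r = run_exit V r'"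
  moreover obtain j a b j' a' b' where r: "r = (j, a, b)" "r' = (j', a', b')" by (cases r, cases r')
  moreover have "fst (run_exit V (j, a, b)) = b" "snd (run_exit V (j, a, b)) div 2 = j" for j a b
    unfolding run_exit_def by auto
  ultimately have "b = b'" "j = j'" by metis+
  with \<open>r \<in> runs V\<close> \<open>r' \<in> runs V\<close> show "r = r'"
    using maximal_interval_unique[of "full_column V j" a b a' b b] r
    unfolding runs_def maximal_interval_def by auto
qed

lemma card_runs_unpaired_le:
  assumes "finite V"
  shows "finite (runs V)" "card (runs V) + card (unpaired V) \<le> card (inner_boundary V)"
proof -
  have fin: "finite (inner_boundary V)" using assms unfolding inner_boundary_def by simp
  have exits: "run_exit V ` runs V \<subseteq> inner_boundary V - unpaired V"
    using run_exit_in_boundary by blast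
  then have "finite (run_exit V ` runs V)" using fin finite_subset by blast
  then show "finite (runs V)" using finite_image_iff[OF inj_on_run_exit] by blast
  have "card (runs V) = card (run_exit V ` runs V)"
    using card_image[OF inj_on_run_exit] by simp
  also have "\<dots> \<le> card (inner_boundary V - unpaired V)"
    using card_mono[OF _ exits] fin by simp
  also have "\<dots> = card (inner_boundary V) - card (unpaired V)"
    using card_Diff_subset[OF finite_subset[OF unpaired_subset_boundary fin] unpaired_subset_boundary] .
  finally show "card (runs V) + card (unpaired V) \<le> card (inner_boundary V)"
    using card_mono[OF fin unpaired_subset_boundary] by linarith
qed

lemma covered_by_runs:
  assumes "finite V"
  shows "V \<subseteq> unpaired V \<union> \<Union>(run_rect ` runs V)"
proof
  fix p assume "p \<in> V"
  obtain x y where p: "p = (x, y)" by (cases p)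
  show "p \<in> unpaired V \<union> \<Union>(run_rect ` runs V)"
  proof (cases "partner p \<in> V")
    case False
    then show ?thesis using \<open>p \<in> V\<close> unfolding unpaired_def by auto
  next
    case True
    define j where "j = y div 2"
    have y: "y \<in> {2 * j, 2 * j + 1}" unfolding j_def by auto
    have "full_column V j x"
      using True \<open>p \<in> V\<close> y unfolding full_column_def partner_def p by auto
    moreover have "{t. full_column V j t} \<subseteq> fst ` V"
      unfolding full_column_def by force
    then have "finite {t. full_column V j t}"
      using assms finite_subset by blast
    ultimately obtain a b where "maximal_interval (full_column V j) a b" "x \<in> {a..b}"
      using maximal_interval_exists by blast
    then have "(j, a, b) \<in> runs V" "p \<in> run_rect (j, a, b)"
      unfolding runs_def run_rect_def p using y by auto
    then show ?thesis by blast
  qed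
qed

lemma sum_run_tours_le:
  assumes "finite V"
  shows "(\<Sum>r\<in>runs V. length (run_tour r) + 1) \<le> card V + 2 * card (runs V)"
proof -
  have fin: "finite (runs V)" by (rule card_runs_unpaired_le(1)[OF assms])
  have "(\<Sum>r\<in>runs V. length (run_tour r) + 1) = (\<Sum>r\<in>runs V. card (run_rect r) + 2)"
    using run_tour(3)[of _ V] by (intro sum.cong) auto
  also have "\<dots> = (\<Sum>r\<in>runs V. card (run_rect r)) + 2 * card (runs V)"
    unfolding sum.distrib by simp
  also have "(\<Sum>r\<in>runs V. card (run_rect r)) = card (\<Union>(run_rect ` runs V))"
    using fin run_rect_disjoint[of _ V] finite_run_rect by (intro card_UN_disjoint[symmetric]) auto
  also have "\<dots> \<le> card V"
    using run_rect_subset[of _ V] assms by (intro card_mono) auto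
  finally show ?thesis by simp
qed

lemma l_TS_le_card_add_boundary:
  assumes "finite V" "connected_Z2 V"
  shows "l_TS V \<le> card V + 2 * card (inner_boundary V)"
proof (cases "V = {}")
  case True
  have "closed_walk [(0, 0)]" unfolding closed_walk_def by simp
  then show ?thesis using l_TS_le_closed_walk[of "[(0, 0)]" V] True by (simp add: inner_boundary_def)
next
  case False
  then obtain p0 where "p0 \<in> V" by blast
  then have start: "closed_walk [p0]" "set [p0] \<subseteq> V" unfolding closed_walk_def by auto
  have fin: "finite (runs V)" "finite (unpaired V)"
    using card_runs_unpaired_le(1)[OF assms(1)] assms(1) by (simp_all add: unpaired_def)
  define I where "I = runs V <+> unpaired V"
  define W where "W = case_sum run_tour (\<lambda>p. [p])"
  have "finite I" unfolding I_def using fin by simp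
  moreover have "\<forall>i\<in>I. closed_walk (W i) \<and> set (W i) \<subseteq> V"
    unfolding I_def W_def using run_tour[of _ V] run_rect_subset[of _ V]
    by (auto simp: closed_walk_def unpaired_def) blast
  moreover have "(\<Union>i\<in>I. set (W i)) = (\<Union>r\<in>runs V. set (run_tour r)) \<union> unpaired V"
    unfolding I_def W_def Plus_def by auto
  then have "V \<subseteq> set [p0] \<union> (\<Union>i\<in>I. set (W i))"
    using covered_by_runs[OF assms(1)] run_tour(2)[of _ V] by auto
  ultimately obtain c where c: "closed_walk c" "V \<subseteq> set c"
    "length c \<le> length [p0] + (\<Sum>i\<in>I. length (W i) + 1)"
    using closed_walks_merge[OF assms(2) _ _ start] by blast
  have "(\<Sum>i\<in>I. length (W i) + 1) = (\<Sum>r\<in>runs V. length (run_tour r) + 1) + 2 * card (unpaired V)"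
    unfolding I_def W_def using fin by (simp add: sum.Plus)
  also have "\<dots> \<le> card V + 2 * card (inner_boundary V)"
    using sum_run_tours_le[OF assms(1)] card_runs_unpaired_le(2)[OF assms(1)] by linarith
  finally show ?thesis using l_TS_le_closed_walk[OF c(1,2)] c(3) by simp
qed

theorem lemma2p1:
  fixes V :: "(int \<times> int) set"
  assumes "finite V" and "connected_Z2 V"
  shows "real (l_TS V) \<le>
           real (card V) * (1 + 8 * (real (card (inner_boundary V)) / real (card V)) powr (1/3))"
proof (cases "V = {}")
  case True
  then show ?thesis using l_TS_le_card_add_boundary[OF assms] by (simp add: inner_boundary_def)
next
  case False
  define n where "n = real (card V)"
  define t where "t = real (card (inner_boundary V)) / n"
  have "n > 0" using False assms(1) unfolding n_def by (simp add: card_gt_0_iff)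
  have "card (inner_boundary V) \<le> card V"
    using assms(1) by (intro card_mono) (auto simp: inner_boundary_def)
  then have "0 \<le> t" "t \<le> 1" using \<open>n > 0\<close> unfolding t_def n_def by auto
  then have "t \<le> t powr (1/3)" using powr_mono'[of "1/3" 1 t] by simp
  have "real (l_TS V) \<le> n + 2 * (n * t)"
    using l_TS_le_card_add_boundary[OF assms] \<open>n > 0\<close> unfolding n_def t_def by simp
  also have "\<dots> \<le> n * (1 + 8 * t powr (1/3))"
    using \<open>n > 0\<close> \<open>0 \<le> t\<close> \<open>t \<le> t powr (1/3)\<close> by (simp add: algebra_simps)
  finally show ?thesis unfolding n_def t_def .
qed

end
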